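(* Let $R_1$ and $R_2$ be finite commutative local principal ideal rings with unity, and let $R=R_1\times R_2$. Suppose $\operatorname{diam}(\Gamma(R_1))=0$ and $\operatorname{diam}(\Gamma(R_2))=2$. Then $\overline{\Gamma(R)}$ is a divisor graph if and only if $R_1$ is an integral domain.
   Context: For a commutative ring $S$ with unity, $Z(S)$ denotes its set of zero divisors. The zero divisor graph $\Gamma(S)$ is the simple graph with vertex set $Z(S)\setminus\{0\}$, distinct $a,b$ adjacent iff $ab=0$; its complement $\overline{\Gamma(S)}$ has the same vertex set with distinct $a,b$ adjacent iff $ab\neq 0$. The diameter of a graph is the maximum distance (number of edges in a shortest path) between pairs of vertices. In the paper's usage, $\operatorname{diam}(\Gamma(S))=0$ means $\Gamma(S)$ has at most one vertex, i.e. $S$ has at most one nonzero zero divisor (this includes the case that $S$ is an integral domain). A ring is local if it has a unique maximal ideal. For a nonempty set $T$ of positive integers, the divisor graph $G(T)$ has vertex set $T$, with distinct $i,j$ adjacent iff $i\mid j$ or $j\mid i$; a graph is a divisor graph if it is isomorphic to some $G(T)$. *)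

theory Defs
  imports "HOL-Algebra.Algebra" "HOL-Library.Extended_Nat"
begin

definition zero_divisors :: "('a, 'm) ring_scheme \<Rightarrow> 'a set" where
  "zero_divisors S = {a \<in> carrier S. \<exists>b \<in> carrier S. b \<noteq> \<zero>\<^bsub>S\<^esub> \<and> a \<otimes>\<^bsub>S\<^esub> b = \<zero>\<^bsub>S\<^esub>}"

definition local_ring :: "('a, 'm) ring_scheme \<Rightarrow> bool" where
  "local_ring S \<longleftrightarrow> (\<exists>!I. maximalideal I S)"

definition principal_ideal_ring :: "('a, 'm) ring_scheme \<Rightarrow> bool" where
  "principal_ideal_ring S \<longleftrightarrow> (\<forall>I. ideal I S \<longrightarrow> principalideal I S)"

definition has_walk :: "'v set \<Rightarrow> ('v \<Rightarrow> 'v \<Rightarrow> bool) \<Rightarrow> 'v \<Rightarrow> 'v \<Rightarrow> nat \<Rightarrow> bool" where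
  "has_walk V E x y n \<longleftrightarrow> (\<exists>p :: 'v list. length p = Suc n \<and> set p \<subseteq> V \<and>
      hd p = x \<and> last p = y \<and> (\<forall>i < n. E (p ! i) (p ! Suc i)))"

definition gdist :: "'v set \<Rightarrow> ('v \<Rightarrow> 'v \<Rightarrow> bool) \<Rightarrow> 'v \<Rightarrow> 'v \<Rightarrow> enat" where
  "gdist V E x y = (if \<exists>n. has_walk V E x y n then enat (LEAST n. has_walk V E x y n) else \<infinity>)"

text \<open>Diameter: supremum of distances between pairs of vertices (0 for at most one vertex).\<close>
definition gdiam :: "'v set \<Rightarrow> ('v \<Rightarrow> 'v \<Rightarrow> bool) \<Rightarrow> enat" where
  "gdiam V E = (SUP x\<in>V. SUP y\<in>V. gdist V E x y)"

definition zdg_vertices :: "('a, 'm) ring_scheme \<Rightarrow> 'a set" where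
  "zdg_vertices S = zero_divisors S - {\<zero>\<^bsub>S\<^esub>}"

definition zdg_adj :: "('a, 'm) ring_scheme \<Rightarrow> 'a \<Rightarrow> 'a \<Rightarrow> bool" where
  "zdg_adj S a b \<longleftrightarrow> a \<noteq> b \<and> a \<otimes>\<^bsub>S\<^esub> b = \<zero>\<^bsub>S\<^esub>"

definition zdg_compl_adj :: "('a, 'm) ring_scheme \<Rightarrow> 'a \<Rightarrow> 'a \<Rightarrow> bool" where
  "zdg_compl_adj S a b \<longleftrightarrow> a \<noteq> b \<and> a \<otimes>\<^bsub>S\<^esub> b \<noteq> \<zero>\<^bsub>S\<^esub>"

definition divisor_graph :: "'v set \<Rightarrow> ('v \<Rightarrow> 'v \<Rightarrow> bool) \<Rightarrow> bool" where
  "divisor_graph V E \<longleftrightarrow> (\<exists>(T :: nat set) f. T \<noteq> {} \<and> (\<forall>t\<in>T. 0 < t) \<and> bij_betw f V T \<and>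
     (\<forall>x\<in>V. \<forall>y\<in>V. E x y \<longleftrightarrow> (f x \<noteq> f y \<and> (f x dvd f y \<or> f y dvd f x))))"

end

(*
  If R1 is a domain, vertices (a, b) and (c, d) of the complement are adjacent exactly when
  a, c are both nonzero or b d is nonzero. A finite local principal ideal ring is a chain ring:
  every nonzero element is a unit times a power of a generator of the maximal ideal, so
  divisibility is total and a larger principal ideal annihilates less. Ranking the vertices by
  the size of the principal ideal of the second coordinate, signed by whether the first
  coordinate vanishes, makes adjacency transitive along increasing rank. So the complement is a
  comparability graph, hence a divisor graph: label a vertex by the product of distinct primes
  attached to the vertices below it.

  If R1 is not a domain, its only nonzero zero divisor a satisfies a^2 = 0, and diameter 2 of the
  zero divisor graph of R2 yields x, y with x^2 /= 0 and x y = y^2 = 0. Seven vertices built from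
  a, x and y span a subgraph admitting no transitive orientation, whereas divisibility of the
  labels of a divisor graph would provide one.
*)

theory Submission
  imports Defs "HOL-Computational_Algebra.Primes"
begin

section \<open>Graph diameter\<close>

lemma gdiam_eq_0_imp_eq:
  assumes "gdiam V E = 0" "u \<in> V" "v \<in> V"
  shows "u = v"
proof (rule ccontr)
  assume "u \<noteq> v"
  then have "\<not> has_walk V E u v 0"
    unfolding has_walk_def by (auto simp: length_Suc_conv)
  have "gdist V E u v \<noteq> 0"
  proof (cases "\<exists>n. has_walk V E u v n")
    case True
    then have "has_walk V E u v (LEAST n. has_walk V E u v n)"
      by (rule LeastI_ex)
    then have "(LEAST n. has_walk V E u v n) \<noteq> 0"
      using \<open>\<not> has_walk V E u v 0\<close> by metis
    then show ?thesis
      using True unfolding gdist_def zero_enat_def by simp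
  qed (simp add: gdist_def)
  moreover have "gdist V E u v \<le> gdiam V E"
    unfolding gdiam_def using assms(2,3) by (meson SUP_upper order_trans)
  ultimately show False
    using assms(1) by simp
qed

lemma gdiam_le_1_if_complete:
  assumes "\<And>u v. u \<in> V \<Longrightarrow> v \<in> V \<Longrightarrow> u \<noteq> v \<Longrightarrow> E u v"
  shows "gdiam V E \<le> 1"
  unfolding gdiam_def
proof (intro SUP_least)
  fix u v assume uv: "u \<in> V" "v \<in> V"
  show "gdist V E u v \<le> 1"
  proof (cases "u = v")
    case True
    then have "has_walk V E u v 0"
      unfolding has_walk_def using uv by (intro exI[of _ "[u]"]) auto
    then show ?thesis
      unfolding gdist_def by (auto simp: Least_eq_0 zero_enat_def[symmetric])
  next
    case False
    then have "has_walk V E u v 1"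
      unfolding has_walk_def using uv assms by (intro exI[of _ "[u, v]"]) auto
    then have "(LEAST n. has_walk V E u v n) \<le> 1"
      by (rule Least_le)
    then show ?thesis
      unfolding gdist_def using \<open>has_walk V E u v 1\<close> by (auto simp: one_enat_def)
  qed
qed

section \<open>Divisor graphs and comparability graphs\<close>

lemma finite_inj_on_primes:
  assumes "finite V"
  obtains g :: "'v \<Rightarrow> nat" where "inj_on g V" "\<And>x. x \<in> V \<Longrightarrow> Factorial_Ring.prime (g x)"
proof -
  obtain B where B: "B \<subseteq> {p::nat. Factorial_Ring.prime p}" "finite B" "card B = card V"
    using infinite_arbitrarily_large[OF primes_infinite] by blast
  then obtain g where "bij_betw g V B"
    using finite_same_card_bij[OF assms] by metis
  then show ?thesis
    using that B(1) unfolding bij_betw_def by auto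
qed

lemma divisor_graph_of_comparability:
  assumes "finite V" "V \<noteq> {}"
    and irrefl: "\<And>x. x \<in> V \<Longrightarrow> \<not> lt x x"
    and trans: "\<And>x y z. x \<in> V \<Longrightarrow> y \<in> V \<Longrightarrow> z \<in> V \<Longrightarrow> lt x y \<Longrightarrow> lt y z \<Longrightarrow> lt x z"
    and adj: "\<And>x y. x \<in> V \<Longrightarrow> y \<in> V \<Longrightarrow> E x y \<longleftrightarrow> x \<noteq> y \<and> (lt x y \<or> lt y x)"
  shows "divisor_graph V E"
proof -
  obtain g :: "_ \<Rightarrow> nat" where g: "inj_on g V" "\<And>x. x \<in> V \<Longrightarrow> Factorial_Ring.prime (g x)"
    using finite_inj_on_primes[OF assms(1)] by blast
  define down where "down x = {y \<in> V. y = x \<or> lt y x}" for x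
  define f where "f x = prod g (down x)" for x
  have fin_down: "finite (down x)" for x
    using assms(1) unfolding down_def by simp
  have down_mono: "down x \<subseteq> down y \<longleftrightarrow> x = y \<or> lt x y" if "x \<in> V" "y \<in> V" for x y
    using that trans unfolding down_def by blast
  have dvd_iff: "f x dvd f y \<longleftrightarrow> x = y \<or> lt x y" if "x \<in> V" "y \<in> V" for x y
  proof -
    have "f x dvd f y \<longleftrightarrow> down x \<subseteq> down y"
    proof
      assume "f x dvd f y"
      show "down x \<subseteq> down y"
      proof
        fix s assume s: "s \<in> down x"
        then have "g s dvd f y"
          using \<open>f x dvd f y\<close> fin_down unfolding f_def by (meson dvd_prodI dvd_trans)
        then obtain t where t: "t \<in> down y" "g s dvd g t"
          using prime_dvd_prod_iff[OF fin_down] g(2) s unfolding f_def down_def by blast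
        have "s \<in> V" "t \<in> V"
          using s t(1) unfolding down_def by auto
        then have "g s = g t"
          using primes_dvd_imp_eq g(2) t(2) by blast
        then have "s = t"
          using g(1) \<open>s \<in> V\<close> \<open>t \<in> V\<close> by (simp add: inj_on_eq_iff)
        then show "s \<in> down y"
          using t(1) by simp
      qed
    qed (simp add: f_def prod_dvd_prod_subset[OF fin_down])
    then show ?thesis
      using down_mono[OF that] by simp
  qed
  have "inj_on f V"
    by (rule inj_onI) (metis dvd_iff dvd_refl irrefl trans)
  moreover have "0 < f x" if "x \<in> V" for x
    using g(2) fin_down unfolding f_def down_def by (simp add: prime_gt_0_nat prod_pos)
  ultimately show ?thesis
    unfolding divisor_graph_def using assms(2) adj dvd_iff
    by (intro exI[of _ "f ` V"] exI[of _ f]) (auto simp: bij_betw_def inj_on_eq_iff)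
qed

text \<open>Break ties of the rank by an injection into \<open>nat\<close> to obtain a strict order.\<close>

lemma divisor_graph_of_rank:
  fixes rank :: "'v \<Rightarrow> 'r::linorder"
  assumes "finite V" "V \<noteq> {}"
    and irrefl: "\<And>x. \<not> E x x"
    and sym: "\<And>x y. x \<in> V \<Longrightarrow> y \<in> V \<Longrightarrow> E x y \<Longrightarrow> E y x"
    and trans: "\<And>x y z. x \<in> V \<Longrightarrow> y \<in> V \<Longrightarrow> z \<in> V \<Longrightarrow> x \<noteq> z \<Longrightarrow> E x y \<Longrightarrow> E y z \<Longrightarrow>
      rank x \<le> rank y \<Longrightarrow> rank y \<le> rank z \<Longrightarrow> E x z"
  shows "divisor_graph V E"
proof -
  obtain h :: "'v \<Rightarrow> nat" where h: "inj_on h V"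
    using finite_imp_inj_to_nat_seg[OF assms(1)] by blast
  define lt where "lt x y \<longleftrightarrow> E x y \<and> (rank x < rank y \<or> rank x = rank y \<and> h x < h y)" for x y
  show ?thesis
  proof (rule divisor_graph_of_comparability[OF assms(1,2), of lt])
    fix x y z assume "x \<in> V" "y \<in> V" "z \<in> V" "lt x y" "lt y z"
    then have xy: "E x y" "rank x < rank y \<or> rank x = rank y \<and> h x < h y"
      and yz: "E y z" "rank y < rank z \<or> rank y = rank z \<and> h y < h z"
      by (simp_all add: lt_def)
    then have lex: "rank x < rank z \<or> rank x = rank z \<and> h x < h z"
      by (auto intro: less_trans)
    then have "x \<noteq> z"
      by auto
    moreover have "rank x \<le> rank y" "rank y \<le> rank z"
      using xy(2) yz(2) by auto
    ultimately show "lt x z"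
      using trans[OF \<open>x \<in> V\<close> \<open>y \<in> V\<close> \<open>z \<in> V\<close>] xy(1) yz(1) lex unfolding lt_def by blast
  next
    fix x y assume "x \<in> V" "y \<in> V"
    show "E x y \<longleftrightarrow> x \<noteq> y \<and> (lt x y \<or> lt y x)"
    proof
      assume "E x y"
      then have "x \<noteq> y" "E y x"
        using irrefl sym \<open>x \<in> V\<close> \<open>y \<in> V\<close> by auto
      moreover from this have "h x \<noteq> h y"
        using h \<open>x \<in> V\<close> \<open>y \<in> V\<close> by (simp add: inj_on_eq_iff)
      ultimately show "x \<noteq> y \<and> (lt x y \<or> lt y x)"
        using \<open>E x y\<close> unfolding lt_def by (cases "rank x" "rank y" rule: linorder_cases) auto
    next
      assume "x \<noteq> y \<and> (lt x y \<or> lt y x)"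
      then show "E x y"
        using sym \<open>x \<in> V\<close> \<open>y \<in> V\<close> unfolding lt_def by blast
    qed
  qed (simp add: lt_def irrefl)
qed

lemma divisor_graph_obtain_comparability:
  assumes "divisor_graph V adj"
  obtains below where "\<And>x y z. below x y \<Longrightarrow> below y z \<Longrightarrow> below x z"
    and "\<And>x y. x \<in> V \<Longrightarrow> y \<in> V \<Longrightarrow> adj x y \<longleftrightarrow> x \<noteq> y \<and> (below x y \<or> below y x)"
proof -
  obtain T and f :: "_ \<Rightarrow> nat" where f: "bij_betw f V T"
    and adj: "\<And>x y. x \<in> V \<Longrightarrow> y \<in> V \<Longrightarrow> adj x y \<longleftrightarrow> f x \<noteq> f y \<and> (f x dvd f y \<or> f y dvd f x)"
    using assms unfolding divisor_graph_def by blast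
  have "f x \<noteq> f y \<longleftrightarrow> x \<noteq> y" if "x \<in> V" "y \<in> V" for x y
    using f that unfolding bij_betw_def by (auto simp: inj_on_eq_iff)
  then show ?thesis
    using that[of "\<lambda>x y. f x dvd f y"] adj dvd_trans by metis
qed

lemma seven_no_transitive_orientation:
  assumes trans: "\<And>x y z. below x y \<Longrightarrow> below y z \<Longrightarrow> below x z"
    and "below A B \<or> below B A" "below A C \<or> below C A" "below A E \<or> below E A" "below A G \<or> below G A"
      "below B E \<or> below E B" "below D F \<or> below F D" "below D G \<or> below G D" "below E F \<or> below F E"
      "below E G \<or> below G E" "below F G \<or> below G F"
    and "\<not> below A D" "\<not> below D A" "\<not> below A F" "\<not> below F A" "\<not> below B C" "\<not> below C B"
      "\<not> below B D" "\<not> below D B" "\<not> below B F" "\<not> below F B" "\<not> below B G" "\<not> below G B"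
      "\<not> below C E" "\<not> below E C" "\<not> below C G" "\<not> below G C" "\<not> below D E" "\<not> below E D"
  shows False
proof (cases "below A C")
  case True
  then have "below A B" "below A E" "below A G"
    using assms trans by metis+
  then have "below F E" "below D G"
    using assms trans by metis+
  then have "below F D" "below B E"
    using assms trans by metis+
  then have "below G E"
    using assms trans by metis
  then show False
    using \<open>below D G\<close> assms trans by metis
next
  case False
  then have "below B A" "below E A" "below G A"
    using assms trans by metis+
  then have "below E F" "below G D"
    using assms trans by metis+
  then have "below D F" "below E B"
    using assms trans by metis+
  then have "below E G"
    using assms trans by metis
  then show False
    using \<open>below G D\<close> assms trans by metis
qed

section \<open>Finite local principal ideal rings are chain rings\<close>

lemma (in cring) cgenideal_iff_divides:
  assumes "b \<in> carrier R"
  shows "a \<in> PIdl b \<longleftrightarrow> b divides a"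
  using assms unfolding cgenideal_def factor_def by (auto simp: m_comm)

lemma (in cring) cgenideal_subset_iff_divides:
  assumes "a \<in> carrier R" "b \<in> carrier R"
  shows "PIdl a \<subseteq> PIdl b \<longleftrightarrow> b divides a"
proof
  assume "PIdl a \<subseteq> PIdl b"
  then show "b divides a"
    using cgenideal_self[OF assms(1)] cgenideal_iff_divides[OF assms(2)] by blast
next
  assume "b divides a"
  then show "PIdl a \<subseteq> PIdl b"
    using cgenideal_minimal[OF cgenideal_ideal[OF assms(2)]] cgenideal_iff_divides[OF assms(2)]
    by blast
qed

lemma (in cring) card_cgenideal_pos:
  assumes "finite (carrier R)" "a \<in> carrier R"
  shows "0 < card (PIdl a)"
proof -
  have "PIdl a \<subseteq> carrier R"
    using assms(2) by (auto simp: cgenideal_def)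
  then show ?thesis
    using assms cgenideal_self[OF assms(2)] card_gt_0_iff finite_subset by blast
qed

lemma (in cring) finite_proper_ideal_in_maximalideal:
  assumes "finite (carrier R)" "ideal I R" "I \<noteq> carrier R"
  obtains M where "maximalideal M R" "I \<subseteq> M"
proof -
  define S where "S = {J. ideal J R \<and> I \<subseteq> J \<and> J \<noteq> carrier R}"
  have "S \<subseteq> Pow (carrier R)"
    unfolding S_def by (auto dest: ideal.axioms(1) additive_subgroup.a_subset)
  then have "finite S"
    using assms(1) finite_subset by blast
  moreover have "I \<in> S"
    unfolding S_def using assms(2,3) by blast
  ultimately obtain M where M: "M \<in> S" and max: "\<forall>J \<in> S. M \<subseteq> J \<longrightarrow> M = J"
    using finite_has_maximal[of S] by blast
  have "maximalideal M R"
  proof (rule maximalidealI)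
    fix J assume "ideal J R" "M \<subseteq> J"
    then show "J = M \<or> J = carrier R"
      using M max unfolding S_def by blast
  qed (use M in \<open>auto simp: S_def\<close>)
  then show ?thesis
    using that M unfolding S_def by blast
qed

lemma (in cring) maximalideal_disjoint_Units:
  assumes "maximalideal M R" "u \<in> Units R"
  shows "u \<notin> M"
proof
  interpret maximalideal M R by fact
  assume "u \<in> M"
  then have "inv u \<otimes> u \<in> M"
    using assms(2) by (intro I_l_closed) auto
  then show False
    using assms(2) one_imp_carrier I_notcarr by simp
qed

lemma (in cring) local_ring_nontrivial:
  assumes "local_ring R"
  shows "\<one> \<noteq> \<zero>"
proof
  obtain M where M: "maximalideal M R"
    using assms unfolding local_ring_def by blast
  then have "\<zero> \<in> M"
    by (simp add: additive_subgroup.zero_closed ideal.axioms(1) maximalideal.axioms(1))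
  moreover assume "\<one> = \<zero>"
  ultimately show False
    using maximalideal_disjoint_Units[OF M] Units_one_closed by metis
qed

lemma (in cring) finite_local_ring_nonunit_in_maximalideal:
  assumes "finite (carrier R)" "local_ring R" "maximalideal M R"
    and "r \<in> carrier R" "r \<notin> Units R"
  shows "r \<in> M"
proof -
  have "\<one> \<notin> PIdl r"
    using assms(4,5) divides_one by (simp add: cgenideal_iff_divides)
  then obtain J where J: "maximalideal J R" "PIdl r \<subseteq> J"
    using finite_proper_ideal_in_maximalideal[OF assms(1) cgenideal_ideal[OF assms(4)]] by blast
  then have "J = M"
    using assms(2,3) unfolding local_ring_def by blast
  then show ?thesis
    using J(2) cgenideal_self[OF assms(4)] by blast
qed

text \<open>A Nakayama-type absorption: \<open>\<one> \<ominus> m\<close> is a unit, so \<open>(\<one> \<ominus> m) \<otimes> r = \<zero>\<close> forces \<open>r = \<zero>\<close>.\<close>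

lemma (in cring) finite_local_ring_absorb:
  assumes "finite (carrier R)" "local_ring R" "maximalideal M R"
    and "m \<in> M" "r \<in> carrier R" "r = m \<otimes> r"
  shows "r = \<zero>"
proof -
  interpret maximalideal M R by fact
  have m: "m \<in> carrier R"
    using assms(4) a_subset by blast
  have "\<one> \<ominus> m \<notin> M"
  proof
    assume "\<one> \<ominus> m \<in> M"
    then have "(\<one> \<ominus> m) \<oplus> m \<in> M"
      using assms(4) by (rule a_closed)
    then show False
      using m maximalideal_disjoint_Units[OF assms(3)] by (simp add: a_minus_def a_assoc l_neg)
  qed
  then have unit: "\<one> \<ominus> m \<in> Units R"
    using finite_local_ring_nonunit_in_maximalideal[OF assms(1-3), of "\<one> \<ominus> m"] m by auto
  have "(\<one> \<ominus> m) \<otimes> r = r \<ominus> m \<otimes> r"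
    using m assms(5) by (simp add: a_minus_def l_distr l_minus)
  also have "\<dots> = \<zero>"
    using assms(5) by (simp add: assms(6)[symmetric] a_minus_def r_neg)
  finally have annihilates: "(\<one> \<ominus> m) \<otimes> r = \<zero>" .
  have "r = inv (\<one> \<ominus> m) \<otimes> ((\<one> \<ominus> m) \<otimes> r)"
    using unit assms(5) by (simp add: m_assoc[symmetric] Units_l_inv Units_closed Units_inv_closed)
  also have "\<dots> = \<zero>"
    unfolding annihilates using unit by (simp add: Units_inv_closed)
  finally show ?thesis .
qed

lemma (in cring) unit_pow_divides_unit_pow:
  fixes k l :: nat
  assumes "u \<in> Units R" "v \<in> carrier R" "p \<in> carrier R" "k \<le> l"
  shows "(u \<otimes> p [^] k) divides (v \<otimes> p [^] l)"
proof
  have u: "u \<in> carrier R" "inv u \<in> carrier R"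
    using assms(1) by auto
  have "(u \<otimes> p [^] k) \<otimes> (inv u \<otimes> v \<otimes> p [^] (l - k))
      = (u \<otimes> inv u) \<otimes> (v \<otimes> (p [^] k \<otimes> p [^] (l - k)))"
    using u assms(2,3) by (simp add: m_ac)
  also have "\<dots> = v \<otimes> p [^] l"
    using assms by (simp add: nat_pow_mult)
  finally show "v \<otimes> p [^] l = (u \<otimes> p [^] k) \<otimes> (inv u \<otimes> v \<otimes> p [^] (l - k))"
    by simp
qed (use assms in auto)

text \<open>Induction on the size of the principal ideal: the quotient of a nonunit by \<open>p\<close> generates a strictly
  larger one.\<close>

lemma (in cring) finite_local_ring_unit_pow:
  assumes fin: "finite (carrier R)" and loc: "local_ring R"
    and M: "maximalideal M R" "M = PIdl p" "p \<in> carrier R"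
    and r: "r \<in> carrier R" "r \<noteq> \<zero>"
  shows "\<exists>u \<in> Units R. \<exists>k::nat. r = u \<otimes> p [^] k"
  using r
proof (induction "card (carrier R) - card (PIdl r)" arbitrary: r rule: less_induct)
  case less
  show ?case
  proof (cases "r \<in> Units R")
    case True
    then show ?thesis
      using less.prems(1) by (intro bexI[of _ r] exI[of _ 0]) auto
  next
    case False
    then have "p divides r"
      using finite_local_ring_nonunit_in_maximalideal[OF fin loc M(1) less.prems(1)] M(2,3)
      by (simp add: cgenideal_iff_divides)
    then obtain x where x: "x \<in> carrier R" "r = p \<otimes> x"
      by blast
    then have "x \<noteq> \<zero>"
      using less.prems M(3) by auto
    have "\<not> r divides x"
    proof
      assume "r divides x"
      then obtain c where c: "c \<in> carrier R" "x = r \<otimes> c"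
        by blast
      then have "x = (p \<otimes> c) \<otimes> x"
        using x M(3) by (simp add: m_ac)
      moreover have "p \<otimes> c \<in> M"
        using M c(1) cgenideal_self[OF M(3)] ideal.I_r_closed[OF maximalideal.axioms(1)[OF M(1)]]
        by blast
      ultimately show False
        using finite_local_ring_absorb[OF fin loc M(1)] x(1) \<open>x \<noteq> \<zero>\<close> by blast
    qed
    moreover have "x divides r"
      using x M(3) by (auto simp: factor_def m_comm)
    ultimately have "PIdl r \<subset> PIdl x"
      using x(1) less.prems(1) by (simp add: subset_not_subset_eq cgenideal_subset_iff_divides)
    moreover have "PIdl x \<subseteq> carrier R"
      using x(1) by (auto simp: cgenideal_def)
    ultimately have "card (PIdl r) < card (PIdl x)" "card (PIdl x) \<le> card (carrier R)"
      using fin by (auto intro: psubset_card_mono card_mono finite_subset)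
    then have "card (carrier R) - card (PIdl x) < card (carrier R) - card (PIdl r)"
      by linarith
    from less.hyps[OF this x(1) \<open>x \<noteq> \<zero>\<close>]
    obtain u and k :: nat where u: "u \<in> Units R" "x = u \<otimes> p [^] k"
      by blast
    then have "r = u \<otimes> p [^] Suc k"
      using M(3) unfolding x(2) u(2) by (simp add: m_ac Units_closed)
    then show ?thesis
      using u(1) by blast
  qed
qed

locale chain_ring = cring +
  assumes divides_total: "\<lbrakk>a \<in> carrier R; b \<in> carrier R\<rbrakk> \<Longrightarrow> a divides b \<or> b divides a"

lemma (in cring) finite_local_principal_ideal_ring_is_chain_ring:
  assumes "finite (carrier R)" "local_ring R" "principal_ideal_ring R"
  shows "chain_ring R"
proof unfold_locales
  obtain M where M: "maximalideal M R"
    using assms(2) unfolding local_ring_def by blast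
  then have "principalideal M R"
    using assms(3) unfolding principal_ideal_ring_def by (blast dest: maximalideal.axioms(1))
  then obtain p where p: "p \<in> carrier R" "M = PIdl p"
    using principalideal.generate cgenideal_eq_genideal by metis
  note unit_pow = finite_local_ring_unit_pow[OF assms(1,2) M p(2,1)]
  fix a b assume ab: "a \<in> carrier R" "b \<in> carrier R"
  show "a divides b \<or> b divides a"
  proof (cases "a = \<zero> \<or> b = \<zero>")
    case True
    then show ?thesis
      using ab divides_zero by blast
  next
    case False
    then obtain u v and k l :: nat where "u \<in> Units R" "a = u \<otimes> p [^] k" "v \<in> Units R" "b = v \<otimes> p [^] l"
      using unit_pow ab by meson
    then show ?thesis
      using unit_pow_divides_unit_pow p(1) by (cases "k \<le> l") auto
  qed
qed

lemma (in cring) divides_mult_eq_zero: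
  assumes "a divides b" "a \<in> carrier R" "x \<in> carrier R" "a \<otimes> x = \<zero>"
  shows "b \<otimes> x = \<zero>"
proof -
  obtain c where c: "c \<in> carrier R" "b = a \<otimes> c"
    using assms(1) by blast
  then have "b \<otimes> x = c \<otimes> (a \<otimes> x)"
    using assms(2,3) by (simp add: m_ac)
  then show ?thesis
    using assms(4) c(1) by simp
qed

lemma (in chain_ring) card_cgenideal_le_imp_divides:
  assumes "finite (carrier R)" "a \<in> carrier R" "b \<in> carrier R" "card (PIdl a) \<le> card (PIdl b)"
  shows "b divides a"
proof (rule ccontr)
  assume "\<not> b divides a"
  then have "PIdl b \<subset> PIdl a"
    using divides_total[OF assms(2,3)] assms(2,3)
    by (simp add: subset_not_subset_eq cgenideal_subset_iff_divides)
  moreover have "PIdl a \<subseteq> carrier R"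
    using assms(2) by (auto simp: cgenideal_def)
  ultimately have "card (PIdl b) < card (PIdl a)"
    using assms(1) by (meson finite_subset psubset_card_mono)
  then show False
    using assms(4) by simp
qed

lemma (in chain_ring) mult_nonzero_if_card_cgenideal_le:
  assumes "finite (carrier R)" "a \<in> carrier R" "b \<in> carrier R" "w \<in> carrier R"
    and "a \<otimes> w \<noteq> \<zero>" "card (PIdl a) \<le> card (PIdl b)"
  shows "b \<otimes> w \<noteq> \<zero>"
  using card_cgenideal_le_imp_divides[OF assms(1-3,6)] divides_mult_eq_zero assms(3-5) by blast

section \<open>Zero divisor graphs of diameter 0 and 2\<close>

lemma (in cring) zdg_diam_0_obtain_square_zero:
  assumes "\<one> \<noteq> \<zero>" "\<not> domain R" "gdiam (zdg_vertices R) (zdg_adj R) = 0"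
  obtains a where "a \<in> carrier R" "a \<noteq> \<zero>" "a \<otimes> a = \<zero>"
proof -
  obtain a b where ab: "a \<in> carrier R" "b \<in> carrier R" "a \<noteq> \<zero>" "b \<noteq> \<zero>" "a \<otimes> b = \<zero>"
    using assms(1,2) domain.intro[OF is_cring] domain_axioms.intro by blast
  then have "a \<in> zdg_vertices R" "b \<in> zdg_vertices R"
    unfolding zdg_vertices_def zero_divisors_def using m_comm[of a b] by auto
  then have "a = b"
    using gdiam_eq_0_imp_eq[OF assms(3)] by blast
  then show ?thesis
    using that ab by blast
qed

text \<open>Diameter 2 provides zero divisors \<open>u, v\<close> with \<open>u \<otimes> v \<noteq> \<zero>\<close>; comparing them under divisibility
  gives \<open>x\<close>, and comparing \<open>x\<close> with a partner \<open>y\<close> gives \<open>y \<otimes> y = \<zero>\<close>.\<close>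

lemma (in chain_ring) zdg_diam_2_elements:
  assumes "gdiam (zdg_vertices R) (zdg_adj R) = 2"
  obtains x y where "x \<in> carrier R" "y \<in> carrier R" "y \<noteq> \<zero>"
    "x \<otimes> x \<noteq> \<zero>" "x \<otimes> y = \<zero>" "y \<otimes> y = \<zero>"
proof -
  have "\<exists>u \<in> zdg_vertices R. \<exists>v \<in> zdg_vertices R. u \<noteq> v \<and> u \<otimes> v \<noteq> \<zero>"
  proof (rule ccontr)
    assume "\<not> ?thesis"
    then have "gdiam (zdg_vertices R) (zdg_adj R) \<le> 1"
      by (intro gdiam_le_1_if_complete) (auto simp: zdg_adj_def)
    then show False
      using assms by (simp add: one_enat_def numeral_eq_enat)
  qed
  then obtain u v where uv: "u \<in> zdg_vertices R" "v \<in> zdg_vertices R" "u \<otimes> v \<noteq> \<zero>"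
    by blast
  then have uv_carrier: "u \<in> carrier R" "v \<in> carrier R"
    unfolding zdg_vertices_def zero_divisors_def by auto
  have "\<exists>x \<in> zdg_vertices R. x \<otimes> x \<noteq> \<zero>"
    using divides_total[OF uv_carrier] uv divides_mult_eq_zero[of u v u] divides_mult_eq_zero[of v u v]
      uv_carrier m_comm[OF uv_carrier] by metis
  then obtain x y where x: "x \<in> carrier R" "x \<otimes> x \<noteq> \<zero>"
    and y: "y \<in> carrier R" "y \<noteq> \<zero>" "x \<otimes> y = \<zero>"
    unfolding zdg_vertices_def zero_divisors_def by blast
  have "y \<otimes> y = \<zero>"
    using divides_total[OF x(1) y(1)] divides_mult_eq_zero[of x y y] divides_mult_eq_zero[of y x x]
      x y m_comm[OF x(1) y(1)] by metis
  then show ?thesis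
    using that x y by blast
qed

section \<open>The complement of the zero divisor graph of a product\<close>

lemma RDirProd_mult: "(a, b) \<otimes>\<^bsub>RDirProd R S\<^esub> (c, d) = (a \<otimes>\<^bsub>R\<^esub> c, b \<otimes>\<^bsub>S\<^esub> d)"
  by (simp add: RDirProd_def DirProd_def monoid.defs)

lemma RDirProd_zero: "\<zero>\<^bsub>RDirProd R S\<^esub> = (\<zero>\<^bsub>R\<^esub>, \<zero>\<^bsub>S\<^esub>)"
  by (simp add: RDirProd_def DirProd_def monoid.defs)

lemma zdg_compl_adj_RDirProd:
  "zdg_compl_adj (RDirProd R S) (a, b) (c, d) \<longleftrightarrow>
     (a, b) \<noteq> (c, d) \<and> (a \<otimes>\<^bsub>R\<^esub> c \<noteq> \<zero>\<^bsub>R\<^esub> \<or> b \<otimes>\<^bsub>S\<^esub> d \<noteq> \<zero>\<^bsub>S\<^esub>)"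
  unfolding zdg_compl_adj_def RDirProd_mult RDirProd_zero by auto

lemma zdg_vertices_RDirProd_subset: "zdg_vertices (RDirProd R S) \<subseteq> carrier R \<times> carrier S"
  unfolding zdg_vertices_def zero_divisors_def RDirProd_carrier by auto

lemma RDirProd_zdg_verticesI:
  assumes "a \<in> carrier R" "b \<in> carrier S" "c \<in> carrier R" "d \<in> carrier S"
    and "(a, b) \<noteq> (\<zero>\<^bsub>R\<^esub>, \<zero>\<^bsub>S\<^esub>)" "(c, d) \<noteq> (\<zero>\<^bsub>R\<^esub>, \<zero>\<^bsub>S\<^esub>)"
    and "a \<otimes>\<^bsub>R\<^esub> c = \<zero>\<^bsub>R\<^esub>" "b \<otimes>\<^bsub>S\<^esub> d = \<zero>\<^bsub>S\<^esub>"
  shows "(a, b) \<in> zdg_vertices (RDirProd R S)"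
proof -
  have "(a, b) \<in> zero_divisors (RDirProd R S)"
    unfolding zero_divisors_def RDirProd_carrier
    by (rule CollectI, intro conjI bexI[of _ "(c, d)"]) (use assms in \<open>auto simp: RDirProd_mult RDirProd_zero\<close>)
  then show ?thesis
    unfolding zdg_vertices_def RDirProd_zero using assms(5) by blast
qed

text \<open>Vertices with first coordinate \<open>\<zero>\<close> come first, in decreasing order of the principal ideal
  generated by the second coordinate, followed by the others in increasing order: in a chain ring a
  larger principal ideal annihilates less, which makes adjacency transitive along the rank.\<close>

definition zdg_compl_rank :: "('a, 'm) ring_scheme \<Rightarrow> ('b, 'n) ring_scheme \<Rightarrow> 'a \<times> 'b \<Rightarrow> int" where
  "zdg_compl_rank R S z =
     (if fst z = \<zero>\<^bsub>R\<^esub> then - int (card (PIdl\<^bsub>S\<^esub> (snd z))) else int (card (PIdl\<^bsub>S\<^esub> (snd z))))"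

lemma zdg_compl_adj_RDirProd_trans:
  assumes R: "domain R" and S: "chain_ring S" "finite (carrier S)"
    and carrier: "a \<in> carrier R" "c \<in> carrier R" "e \<in> carrier R"
      "b \<in> carrier S" "d \<in> carrier S" "g \<in> carrier S"
    and "(a, b) \<noteq> (e, g)"
    and adj: "zdg_compl_adj (RDirProd R S) (a, b) (c, d)" "zdg_compl_adj (RDirProd R S) (c, d) (e, g)"
    and rank: "zdg_compl_rank R S (a, b) \<le> zdg_compl_rank R S (c, d)"
      "zdg_compl_rank R S (c, d) \<le> zdg_compl_rank R S (e, g)"
  shows "zdg_compl_adj (RDirProd R S) (a, b) (e, g)"
proof -
  interpret R: domain R by fact
  interpret S: chain_ring S by fact
  note mono = S.mult_nonzero_if_card_cgenideal_le[OF S(2)]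
  have rank_pos: "0 < zdg_compl_rank R S (u, q) \<longleftrightarrow> u \<noteq> \<zero>\<^bsub>R\<^esub>" if "q \<in> carrier S" for u q
    using S.card_cgenideal_pos[OF S(2) that] by (simp add: zdg_compl_rank_def)
  have adj': "(a \<noteq> \<zero>\<^bsub>R\<^esub> \<and> c \<noteq> \<zero>\<^bsub>R\<^esub>) \<or> b \<otimes>\<^bsub>S\<^esub> d \<noteq> \<zero>\<^bsub>S\<^esub>"
    "(c \<noteq> \<zero>\<^bsub>R\<^esub> \<and> e \<noteq> \<zero>\<^bsub>R\<^esub>) \<or> d \<otimes>\<^bsub>S\<^esub> g \<noteq> \<zero>\<^bsub>S\<^esub>"
    using adj carrier R.integral_iff by (auto simp: zdg_compl_adj_RDirProd)
  have "(a \<noteq> \<zero>\<^bsub>R\<^esub> \<and> e \<noteq> \<zero>\<^bsub>R\<^esub>) \<or> b \<otimes>\<^bsub>S\<^esub> g \<noteq> \<zero>\<^bsub>S\<^esub>"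
  proof (cases "a = \<zero>\<^bsub>R\<^esub>")
    case a: True
    show ?thesis
    proof (cases "c = \<zero>\<^bsub>R\<^esub>")
      case True
      then have "card (PIdl\<^bsub>S\<^esub> d) \<le> card (PIdl\<^bsub>S\<^esub> b)"
        using rank(1) a by (simp add: zdg_compl_rank_def)
      then show ?thesis
        using mono[of d b g] adj' True carrier by blast
    next
      case False
      then have "e \<noteq> \<zero>\<^bsub>R\<^esub>"
        using rank(2) rank_pos[OF carrier(5), of c] rank_pos[OF carrier(6), of e] by linarith
      then have "card (PIdl\<^bsub>S\<^esub> d) \<le> card (PIdl\<^bsub>S\<^esub> g)"
        using rank(2) False by (simp add: zdg_compl_rank_def)
      then show ?thesis
        using mono[of d g b] adj' a carrier S.m_comm by metis
    qed
  next
    case False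
    then have "e \<noteq> \<zero>\<^bsub>R\<^esub>"
      using rank rank_pos[OF carrier(4), of a] rank_pos[OF carrier(6), of e] by linarith
    then show ?thesis
      using False by blast
  qed
  then show ?thesis
    using \<open>(a, b) \<noteq> (e, g)\<close> carrier R.integral_iff by (auto simp: zdg_compl_adj_RDirProd)
qed

lemma divisor_graph_zdg_compl_RDirProd:
  assumes R: "domain R" "finite (carrier R)"
    and S: "chain_ring S" "finite (carrier S)" "\<one>\<^bsub>S\<^esub> \<noteq> \<zero>\<^bsub>S\<^esub>"
  shows "divisor_graph (zdg_vertices (RDirProd R S)) (zdg_compl_adj (RDirProd R S))"
proof (rule divisor_graph_of_rank[where rank = "zdg_compl_rank R S"])
  interpret R: domain R by fact
  interpret S: chain_ring S by fact
  show "finite (zdg_vertices (RDirProd R S))"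
    by (rule finite_subset[OF zdg_vertices_RDirProd_subset]) (simp add: R(2) S(2))
  have "(\<zero>\<^bsub>R\<^esub>, \<one>\<^bsub>S\<^esub>) \<in> zdg_vertices (RDirProd R S)"
    by (rule RDirProd_zdg_verticesI[where c = "\<one>\<^bsub>R\<^esub>" and d = "\<zero>\<^bsub>S\<^esub>"]) (use S(3) in auto)
  then show "zdg_vertices (RDirProd R S) \<noteq> {}"
    by blast
  show "\<not> zdg_compl_adj (RDirProd R S) x x" for x
    by (simp add: zdg_compl_adj_def)
  fix x y z
  assume V: "x \<in> zdg_vertices (RDirProd R S)" "y \<in> zdg_vertices (RDirProd R S)"
    "z \<in> zdg_vertices (RDirProd R S)"
  obtain a b c d e g where xyz: "x = (a, b)" "y = (c, d)" "z = (e, g)"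
    by (metis surj_pair)
  then have carrier: "a \<in> carrier R" "c \<in> carrier R" "e \<in> carrier R"
    "b \<in> carrier S" "d \<in> carrier S" "g \<in> carrier S"
    using V zdg_vertices_RDirProd_subset by blast+
  then show "zdg_compl_adj (RDirProd R S) x y \<Longrightarrow> zdg_compl_adj (RDirProd R S) y x"
    unfolding xyz by (auto simp: zdg_compl_adj_RDirProd R.m_comm[of a c] S.m_comm[of b d])
  show "x \<noteq> z \<Longrightarrow> zdg_compl_adj (RDirProd R S) x y \<Longrightarrow> zdg_compl_adj (RDirProd R S) y z \<Longrightarrow>
    zdg_compl_rank R S x \<le> zdg_compl_rank R S y \<Longrightarrow> zdg_compl_rank R S y \<le> zdg_compl_rank R S z \<Longrightarrow>
    zdg_compl_adj (RDirProd R S) x z"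
    unfolding xyz by (rule zdg_compl_adj_RDirProd_trans[OF R(1) S(1,2) carrier])
qed

text \<open>The vertices \<open>(\<zero>, \<one>), (\<zero>, x), (\<zero>, y), (a, x), (\<one>, y), (a, \<zero>), (\<one>, \<zero>)\<close> span a subgraph of the
  complement that admits no transitive orientation.\<close>

lemma not_divisor_graph_zdg_compl_RDirProd:
  assumes "cring R" "cring S"
    and a: "a \<in> carrier R" "a \<noteq> \<zero>\<^bsub>R\<^esub>" "a \<otimes>\<^bsub>R\<^esub> a = \<zero>\<^bsub>R\<^esub>"
    and xy: "x \<in> carrier S" "y \<in> carrier S" "y \<noteq> \<zero>\<^bsub>S\<^esub>"
      "x \<otimes>\<^bsub>S\<^esub> x \<noteq> \<zero>\<^bsub>S\<^esub>" "x \<otimes>\<^bsub>S\<^esub> y = \<zero>\<^bsub>S\<^esub>" "y \<otimes>\<^bsub>S\<^esub> y = \<zero>\<^bsub>S\<^esub>"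
  shows "\<not> divisor_graph (zdg_vertices (RDirProd R S)) (zdg_compl_adj (RDirProd R S))"
proof
  interpret R: cring R by fact
  interpret S: cring S by fact
  let ?V = "zdg_vertices (RDirProd R S)" and ?adj = "zdg_compl_adj (RDirProd R S)"
  assume "divisor_graph ?V ?adj"
  then obtain below where trans: "\<And>u v w. below u v \<Longrightarrow> below v w \<Longrightarrow> below u w"
    and cmp: "\<And>u v. u \<in> ?V \<Longrightarrow> v \<in> ?V \<Longrightarrow> ?adj u v \<longleftrightarrow> u \<noteq> v \<and> (below u v \<or> below v u)"
    by (elim divisor_graph_obtain_comparability) blast
  have edge: "below u v \<or> below v u" if "u \<in> ?V" "v \<in> ?V" "?adj u v" for u v
    using cmp that by blast
  have nonedge: "\<not> below u v" if "u \<in> ?V" "v \<in> ?V" "u \<noteq> v" "\<not> ?adj u v \<or> \<not> ?adj v u" for u v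
    using cmp that by blast
  have one_R: "\<one>\<^bsub>R\<^esub> \<noteq> \<zero>\<^bsub>R\<^esub>" and one_S: "\<one>\<^bsub>S\<^esub> \<noteq> \<zero>\<^bsub>S\<^esub>"
    using a xy by (metis R.r_one R.r_null, metis S.r_one S.r_null)
  have neq: "x \<noteq> \<zero>\<^bsub>S\<^esub>" "x \<noteq> y" "x \<noteq> \<one>\<^bsub>S\<^esub>" "y \<noteq> \<one>\<^bsub>S\<^esub>" "a \<noteq> \<one>\<^bsub>R\<^esub>"
    using a xy one_R by auto
  have "y \<otimes>\<^bsub>S\<^esub> x = \<zero>\<^bsub>S\<^esub>"
    using xy S.m_comm by metis
  note facts = this a xy one_R one_S neq neq[symmetric] a(2)[symmetric] xy(3)[symmetric]
    one_R[symmetric] one_S[symmetric] zdg_compl_adj_RDirProd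
  have v1: "(\<zero>\<^bsub>R\<^esub>, \<one>\<^bsub>S\<^esub>) \<in> ?V"
    by (rule RDirProd_zdg_verticesI[where c = "\<one>\<^bsub>R\<^esub>" and d = "\<zero>\<^bsub>S\<^esub>"]) (use facts in simp_all)
  have v2: "(\<zero>\<^bsub>R\<^esub>, x) \<in> ?V"
    by (rule RDirProd_zdg_verticesI[where c = "\<one>\<^bsub>R\<^esub>" and d = "\<zero>\<^bsub>S\<^esub>"]) (use facts in simp_all)
  have v3: "(\<zero>\<^bsub>R\<^esub>, y) \<in> ?V"
    by (rule RDirProd_zdg_verticesI[where c = "\<one>\<^bsub>R\<^esub>" and d = "\<zero>\<^bsub>S\<^esub>"]) (use facts in simp_all)
  have v4: "(a, x) \<in> ?V"
    by (rule RDirProd_zdg_verticesI[where c = "a" and d = "y"]) (use facts in simp_all)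
  have v5: "(\<one>\<^bsub>R\<^esub>, y) \<in> ?V"
    by (rule RDirProd_zdg_verticesI[where c = "\<zero>\<^bsub>R\<^esub>" and d = "y"]) (use facts in simp_all)
  have v6: "(a, \<zero>\<^bsub>S\<^esub>) \<in> ?V"
    by (rule RDirProd_zdg_verticesI[where c = "a" and d = "\<zero>\<^bsub>S\<^esub>"]) (use facts in simp_all)
  have v7: "(\<one>\<^bsub>R\<^esub>, \<zero>\<^bsub>S\<^esub>) \<in> ?V"
    by (rule RDirProd_zdg_verticesI[where c = "\<zero>\<^bsub>R\<^esub>" and d = "\<one>\<^bsub>S\<^esub>"]) (use facts in simp_all)
  note vertices = v1 v2 v3 v4 v5 v6 v7
  show False
    by (rule seven_no_transitive_orientation[of below "(\<zero>\<^bsub>R\<^esub>, \<one>\<^bsub>S\<^esub>)" "(\<zero>\<^bsub>R\<^esub>, x)"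
          "(\<zero>\<^bsub>R\<^esub>, y)" "(a, x)" "(\<one>\<^bsub>R\<^esub>, y)" "(a, \<zero>\<^bsub>S\<^esub>)" "(\<one>\<^bsub>R\<^esub>, \<zero>\<^bsub>S\<^esub>)"])
      (fact trans | (rule edge nonedge; simp add: vertices facts))+
qed

theorem theorem2p5:
  fixes R1 :: "('a, 'm) ring_scheme" and R2 :: "('b, 'n) ring_scheme"
  assumes "cring R1" and "cring R2"
    and "finite (carrier R1)" and "finite (carrier R2)"
    and "local_ring R1" and "local_ring R2"
    and "principal_ideal_ring R1" and "principal_ideal_ring R2"
    and "gdiam (zdg_vertices R1) (zdg_adj R1) = 0"
    and "gdiam (zdg_vertices R2) (zdg_adj R2) = 2"
  shows "divisor_graph (zdg_vertices (RDirProd R1 R2)) (zdg_compl_adj (RDirProd R1 R2))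
           \<longleftrightarrow> domain R1"
proof -
  interpret R1: cring R1 by fact
  interpret R2: cring R2 by fact
  have chain: "chain_ring R2"
    using R2.finite_local_principal_ideal_ring_is_chain_ring assms(4,6,8) .
  show ?thesis
  proof
    assume dg: "divisor_graph (zdg_vertices (RDirProd R1 R2)) (zdg_compl_adj (RDirProd R1 R2))"
    show "domain R1"
    proof (rule ccontr)
      assume "\<not> domain R1"
      then obtain a where a: "a \<in> carrier R1" "a \<noteq> \<zero>\<^bsub>R1\<^esub>" "a \<otimes>\<^bsub>R1\<^esub> a = \<zero>\<^bsub>R1\<^esub>"
        using R1.zdg_diam_0_obtain_square_zero R1.local_ring_nontrivial assms(5,9) by blast
      obtain x y where xy: "x \<in> carrier R2" "y \<in> carrier R2" "y \<noteq> \<zero>\<^bsub>R2\<^esub>"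
        "x \<otimes>\<^bsub>R2\<^esub> x \<noteq> \<zero>\<^bsub>R2\<^esub>" "x \<otimes>\<^bsub>R2\<^esub> y = \<zero>\<^bsub>R2\<^esub>" "y \<otimes>\<^bsub>R2\<^esub> y = \<zero>\<^bsub>R2\<^esub>"
        using chain_ring.zdg_diam_2_elements[OF chain assms(10)] by blast
      show False
        using not_divisor_graph_zdg_compl_RDirProd[OF assms(1,2) a xy] dg by contradiction
    qed
  next
    assume "domain R1"
    then show "divisor_graph (zdg_vertices (RDirProd R1 R2)) (zdg_compl_adj (RDirProd R1 R2))"
      using divisor_graph_zdg_compl_RDirProd chain R2.local_ring_nontrivial assms(3,4,6) by blast
  qed
qed

end
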